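(* Let $1<\alpha<2$ and let $\{G(n)\}$ be a sequence of random intersection graphs satisfying conditions (A) and (PL) with this $\alpha$. Suppose that for some $\beta>\alpha-1$ we have $m=\Omega(n^\beta)$. Then there is a constant $\delta>0$ such that $\omega'(G(n))\le n^{1-\alpha/2-\delta}$ with probability tending to $1$.
   Context: Random intersection graph: given positive integers $n,m$ and a probability measure $P$ on $\{0,\dots,m\}$, $G(n,m,P)$ has vertex set $V=[n]$ and attribute set $W=\{w_1,\dots,w_m\}$; independent random subsets $S_1,\dots,S_n\subseteq W$ with $\mathbb P(S_v=S)=P(|S|)/\binom{m}{|S|}$; distinct $u,v$ adjacent iff $S_u\cap S_v\ne\emptyset$. For a sequence $G(n)=G(n,m(n),P(n))$ with $m(n)\to\infty$, $X(n)$ has law $P(n)$ and $Y(n)=(n/m)^{1/2}X(n)$. Condition (A): $\mathbb E\,Y(n)=O(1)$. Condition (PL): there are a slowly varying $L$ and $\varepsilon_0\in(0,1/2)$ such that for every sequence $x_n$ with $n^{1/2-\varepsilon_0}\le x_n\le n^{1/2+\varepsilon_0}$, $\mathbb P(Y(n)\ge x_n)\sim L(x_n)x_n^{-\alpha}$. $\omega'(G(n))=\max_{w\in W}|\{v: w\in S_v\}|$. *)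

theory Defs
  imports "HOL-Probability.Probability" "HOL-Library.Landau_Symbols"
begin

text \<open>Attribute set W = {0..<m}; vertex set V = {0..<n}.
  Random attribute set of one vertex: P(S_v = S) = P(|S|) / (m choose |S|).\<close>
definition attr_set_pmf :: "nat \<Rightarrow> nat pmf \<Rightarrow> nat set pmf" where
  "attr_set_pmf m P = bind_pmf P (\<lambda>k. pmf_of_set {S. S \<subseteq> {..<m} \<and> card S = k})"

definition rig_pmf :: "nat \<Rightarrow> nat \<Rightarrow> nat pmf \<Rightarrow> (nat \<Rightarrow> nat set) pmf" where
  "rig_pmf n m P = Pi_pmf {..<n} {} (\<lambda>_. attr_set_pmf m P)"

definition omega' :: "nat \<Rightarrow> nat \<Rightarrow> (nat \<Rightarrow> nat set) \<Rightarrow> nat" where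
  "omega' n m S = Max ((\<lambda>w. card {v \<in> {..<n}. w \<in> S v}) ` {..<m})"

definition slowly_varying :: "(real \<Rightarrow> real) \<Rightarrow> bool" where
  "slowly_varying L \<longleftrightarrow> L \<in> borel_measurable borel \<and>
     (\<forall>\<^sub>F x in at_top. L x > 0) \<and>
     (\<forall>c>0. ((\<lambda>x. L (c * x) / L x) \<longlongrightarrow> 1) at_top)"

text \<open>Y(n) = (n/m)^(1/2) X(n), X(n) ~ P(n).\<close>
definition Y_scale :: "nat \<Rightarrow> nat \<Rightarrow> real" where
  "Y_scale n m = sqrt (real n / real m)"

definition condition_A :: "(nat \<Rightarrow> nat) \<Rightarrow> (nat \<Rightarrow> nat pmf) \<Rightarrow> bool" where
  "condition_A m P \<longleftrightarrow>
     (\<lambda>n. measure_pmf.expectation (P n) (\<lambda>k. Y_scale n (m n) * real k)) \<in> O(\<lambda>_. 1)"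

definition condition_PL :: "real \<Rightarrow> (nat \<Rightarrow> nat) \<Rightarrow> (nat \<Rightarrow> nat pmf) \<Rightarrow> bool" where
  "condition_PL \<alpha> m P \<longleftrightarrow>
     (\<exists>L \<epsilon>0. slowly_varying L \<and> 0 < \<epsilon>0 \<and> \<epsilon>0 < 1/2 \<and>
        (\<forall>x :: nat \<Rightarrow> real.
           (\<forall>n. real n powr (1/2 - \<epsilon>0) \<le> x n \<and> x n \<le> real n powr (1/2 + \<epsilon>0)) \<longrightarrow>
           (\<lambda>n. measure_pmf.prob (P n) {k. Y_scale n (m n) * real k \<ge> x n})
             \<sim>[sequentially] (\<lambda>n. L (x n) * x n powr (- \<alpha>))))"

end

theory Submission
  imports Defs
begin

text \<open>First moment method. If \<open>\<omega>' > x\<close>, some attribute is chosen by a set of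
  \<open>t = \<lfloor>x\<rfloor> + 1\<close> vertices. A fixed attribute lies in \<open>S v\<close> with probability \<open>E X / m\<close>,
  independently in \<open>v\<close>, so this has probability at most
  \<open>m (n choose t) (E X / m)^t \<le> m (e Y sqrt n / (t sqrt m))^t\<close> with \<open>Y = sqrt (n/m) E X\<close>
  bounded by (A). For \<open>t \<ge> 2\<close> the right-hand side decreases in \<open>m\<close>, so \<open>m \<ge> C n^\<beta>\<close> and
  \<open>t \<ge> n^\<gamma>\<close> bound it by \<open>C n^\<beta> (K n^(1/2 - \<beta>/2 - \<gamma>))^t\<close>, which tends to 0 once
  \<open>\<gamma> > (1 - \<beta>)/2\<close>. As \<open>\<beta> > \<alpha> - 1\<close>, this holds for \<open>\<gamma> = 1 - \<alpha>/2 - \<delta>\<close> with small \<open>\<delta>\<close>.\<close>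

lemma card_subsets_containing:
  assumes "finite A" "w \<in> A"
  shows "card {S. S \<subseteq> A \<and> card S = Suc k \<and> w \<in> S} = (card A - 1) choose k"
proof -
  have "{S. S \<subseteq> A \<and> card S = Suc k \<and> w \<in> S} = insert w ` {T. T \<subseteq> A - {w} \<and> card T = k}"
  proof (intro equalityI subsetI)
    fix S assume S: "S \<in> {S. S \<subseteq> A \<and> card S = Suc k \<and> w \<in> S}"
    then have "S - {w} \<in> {T. T \<subseteq> A - {w} \<and> card T = k}" by auto
    moreover have "S = insert w (S - {w})" using S by auto
    ultimately show "S \<in> insert w ` {T. T \<subseteq> A - {w} \<and> card T = k}" by blast
  next
    fix S assume "S \<in> insert w ` {T. T \<subseteq> A - {w} \<and> card T = k}"
    then obtain T where "T \<subseteq> A - {w}" "card T = k" "S = insert w T" by auto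
    moreover have "finite T" "w \<notin> T" using \<open>T \<subseteq> A - {w}\<close> assms(1) finite_subset by blast+
    ultimately show "S \<in> {S. S \<subseteq> A \<and> card S = Suc k \<and> w \<in> S}" using assms(2) by auto
  qed
  moreover have "inj_on (insert w) {T. T \<subseteq> A - {w} \<and> card T = k}"
    by (rule inj_onI) blast
  ultimately show ?thesis
    using n_subsets[of "A - {w}" k] assms by (simp add: card_image)
qed

lemma prob_uniform_subset_contains:
  assumes "finite A" "w \<in> A" "k \<le> card A"
  shows "measure_pmf.prob (pmf_of_set {S. S \<subseteq> A \<and> card S = k}) {S. w \<in> S} = k / card A"
proof -
  have fin: "finite {S. S \<subseteq> A \<and> card S = k}"
    using assms(1) by (simp add: finite_subset[of _ "Pow A"])
  have ne: "{S. S \<subseteq> A \<and> card S = k} \<noteq> {}"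
    using obtain_subset_with_card_n[OF assms(3)] by blast
  show ?thesis
  proof (cases k)
    case 0
    then have "{S. S \<subseteq> A \<and> card S = k} \<inter> {S. w \<in> S} = {}"
      using assms(1) by (auto simp: card_eq_0_iff dest: finite_subset)
    then show ?thesis
      using 0 fin ne by (simp add: measure_pmf_of_set)
  next
    case (Suc j)
    obtain a where a: "card A = Suc a" using assms(2,3) Suc by (cases "card A") auto
    have "measure_pmf.prob (pmf_of_set {S. S \<subseteq> A \<and> card S = k}) {S. w \<in> S}
        = real (a choose j) / real (Suc a choose Suc j)"
      using fin ne assms Suc a
      by (simp add: measure_pmf_of_set n_subsets Int_def card_subsets_containing conj_assoc)
    also have "\<dots> = real (Suc j) / real (Suc a)"
    proof -
      have "real (Suc a) * real (a choose j) = real (Suc a choose Suc j) * real (Suc j)"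
        by (metis Suc_times_binomial_eq of_nat_mult)
      moreover have "0 < Suc a choose Suc j" using assms(3) Suc a by simp
      ultimately show ?thesis
        by (simp add: frac_eq_eq mult.commute del: binomial_Suc_Suc)
    qed
    finally show ?thesis using Suc a by simp
  qed
qed

lemma prob_attr_set_pmf_contains:
  assumes "w < M" "set_pmf Q \<subseteq> {0..M}"
  shows "measure_pmf.prob (attr_set_pmf M Q) {S. w \<in> S} = measure_pmf.expectation Q real / M"
proof -
  have "measure_pmf.prob (attr_set_pmf M Q) {S. w \<in> S}
     = (\<integral>k. measure_pmf.prob (pmf_of_set {S. S \<subseteq> {..<M} \<and> card S = k}) {S. w \<in> S} \<partial>Q)"
    unfolding attr_set_pmf_def measure_pmf_bind
    by (subst measure_pmf.measure_bind[where N="count_space UNIV"])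
      (auto simp: measure_pmf_in_subprob_space)
  also have "\<dots> = (\<integral>k. real k / M \<partial>Q)"
    using assms by (intro integral_cong_AE) (auto simp: AE_measure_pmf_iff prob_uniform_subset_contains)
  finally show ?thesis by simp
qed

lemma prob_rig_pmf_all_contain:
  assumes "w < M" "set_pmf Q \<subseteq> {0..M}" "A \<subseteq> {..<n}"
  shows "measure_pmf.prob (rig_pmf n M Q) {S. \<forall>v\<in>A. w \<in> S v}
           = (measure_pmf.expectation Q real / M) ^ card A"
proof -
  have "{S. \<forall>v\<in>A. w \<in> S v} = Pi {..<n} (\<lambda>v. if v \<in> A then {S. w \<in> S} else UNIV)"
    using assms(3) by (auto simp: Pi_def)
  then have "measure_pmf.prob (rig_pmf n M Q) {S. \<forall>v\<in>A. w \<in> S v}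
      = (\<Prod>v<n. if v \<in> A then measure_pmf.expectation Q real / M else 1)"
    unfolding rig_pmf_def
    by (simp add: measure_Pi_pmf_Pi if_distrib prob_attr_set_pmf_contains[OF assms(1,2)] cong: if_cong)
  also have "\<dots> = (measure_pmf.expectation Q real / M) ^ card A"
    using assms(3) by (simp add: prod.If_cases Int_absorb1)
  finally show ?thesis .
qed

lemma prob_omega'_ge:
  assumes "0 < M" "set_pmf Q \<subseteq> {0..M}"
  shows "measure_pmf.prob (rig_pmf n M Q) {S. t \<le> omega' n M S}
     \<le> M * real (n choose t) * (measure_pmf.expectation Q real / M) ^ t"
proof -
  let ?p = "measure_pmf.prob (rig_pmf n M Q)"
  define \<A> where "\<A> = {A. A \<subseteq> {..<n} \<and> card A = t}"
  define E where "E w A = {S. \<forall>v\<in>A. w \<in> S v}" for w :: nat and A :: "nat set"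
  have "finite \<A>" unfolding \<A>_def by (rule finite_subset[of _ "Pow {..<n}"]) auto
  have "{S. t \<le> omega' n M S} \<subseteq> (\<Union>w<M. \<Union>A\<in>\<A>. E w A)"
  proof
    fix S assume "S \<in> {S. t \<le> omega' n M S}"
    moreover have "omega' n M S \<in> (\<lambda>w. card {v \<in> {..<n}. w \<in> S v}) ` {..<M}"
      unfolding omega'_def using assms(1) by (intro Max_in) auto
    ultimately obtain w where "w < M" "t \<le> card {v \<in> {..<n}. w \<in> S v}" by auto
    then obtain A where "A \<subseteq> {v \<in> {..<n}. w \<in> S v}" "card A = t"
      by (meson obtain_subset_with_card_n)
    with \<open>w < M\<close> show "S \<in> (\<Union>w<M. \<Union>A\<in>\<A>. E w A)" unfolding \<A>_def E_def by auto
  qed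
  then have "?p {S. t \<le> omega' n M S} \<le> ?p (\<Union>w<M. \<Union>A\<in>\<A>. E w A)"
    by (intro measure_pmf.finite_measure_mono) auto
  also have "\<dots> \<le> (\<Sum>w<M. \<Sum>A\<in>\<A>. ?p (E w A))"
    by (intro order.trans[OF measure_pmf.finite_measure_subadditive_finite] sum_mono
        measure_pmf.finite_measure_subadditive_finite \<open>finite \<A>\<close>) auto
  also have "\<dots> = (\<Sum>w<M. \<Sum>A\<in>\<A>. (measure_pmf.expectation Q real / M) ^ t)"
    by (intro sum.cong refl) (auto simp: E_def \<A>_def prob_rig_pmf_all_contain[OF _ assms(2)])
  also have "\<dots> = M * real (n choose t) * (measure_pmf.expectation Q real / M) ^ t"
    using n_subsets[of "{..<n}" t] by (simp add: \<A>_def)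
  finally show ?thesis .
qed

lemma pow_div_fact_le_exp:
  fixes x :: real
  assumes "0 \<le> x"
  shows "x ^ k / fact k \<le> exp x"
proof -
  have "(\<Sum>i\<in>{k}. x ^ i /\<^sub>R fact i) \<le> (\<Sum>i. x ^ i /\<^sub>R fact i)"
    using exp_converges[of x] assms by (intro sum_le_suminf) (auto simp: sums_iff)
  then show ?thesis
    using exp_converges[of x] by (simp add: sums_iff divide_inverse mult.commute)
qed

lemma binomial_le_exp_mult_div_pow:
  assumes "0 < t"
  shows "real (n choose t) \<le> (exp 1 * n / t) ^ t"
proof -
  have binomial_fact: "real (n choose t) * fact t \<le> real n ^ t"
    by (metis binomial_fact_pow of_nat_fact of_nat_le_iff of_nat_mult of_nat_power)
  have "real t ^ t \<le> exp 1 ^ t * fact t"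
    using pow_div_fact_le_exp[of "real t" t] by (simp add: field_simps flip: exp_of_nat_mult)
  then have "real (n choose t) * real t ^ t \<le> exp 1 ^ t * (real (n choose t) * fact t)"
    by (simp add: mult_left_mono mult.left_commute)
  also have "\<dots> \<le> (exp 1 * n) ^ t"
    using binomial_fact by (simp add: mult_left_mono power_mult_distrib)
  finally show ?thesis
    using assms by (simp add: power_divide pos_le_divide_eq)
qed

lemma binomial_mult_pow_le_Y_scale:
  fixes \<mu> :: real
  assumes "0 < t" "0 < M" "0 \<le> \<mu>"
  shows "real (n choose t) * (\<mu> / M) ^ t \<le> (exp 1 * (Y_scale n M * \<mu>) * sqrt n / (t * sqrt M)) ^ t"
proof -
  have "real (n choose t) * (\<mu> / M) ^ t \<le> (exp 1 * n / t) ^ t * (\<mu> / M) ^ t"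
    using assms by (intro mult_right_mono binomial_le_exp_mult_div_pow) auto
  also have "\<dots> = (exp 1 * n / t * (\<mu> / M)) ^ t"
    by (simp only: power_mult_distrib)
  also have "exp 1 * n / t * (\<mu> / M) = exp 1 * (Y_scale n M * \<mu>) * sqrt n / (t * sqrt M)"
    using assms unfolding Y_scale_def
    by (simp add: real_sqrt_divide field_simps flip: power2_eq_square)
  finally show ?thesis .
qed

lemma mult_div_sqrt_pow_antimono:
  fixes M M' c :: real
  assumes "0 < M'" "M' \<le> M" "2 \<le> t" "0 \<le> c"
  shows "M * (c / sqrt M) ^ t \<le> M' * (c / sqrt M') ^ t"
proof -
  have *: "N * (c / sqrt N) ^ t = c\<^sup>2 * (c / sqrt N) ^ (t - 2)" if "0 < N" for N :: real
  proof -
    have "N * (c / sqrt N) ^ t = N * (c / sqrt N)\<^sup>2 * (c / sqrt N) ^ (t - 2)"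
      using assms(3) by (metis le_add_diff_inverse mult.assoc power_add)
    also have "N * (c / sqrt N)\<^sup>2 = c\<^sup>2" using that by (simp add: power_divide)
    finally show ?thesis .
  qed
  have "(c / sqrt M) ^ (t - 2) \<le> (c / sqrt M') ^ (t - 2)"
    using assms by (intro power_mono divide_left_mono) auto
  then show ?thesis
    using assms by (simp add: * mult_left_mono)
qed

lemma prob_omega'_ge_le_powr:
  fixes t :: nat and B C \<beta> \<gamma> :: real
  assumes "0 < n" "0 < M" "set_pmf Q \<subseteq> {0..M}" "2 \<le> t"
    and "Y_scale n M * measure_pmf.expectation Q real \<le> B"
    and "0 < C" "C * n powr \<beta> \<le> M" "n powr \<gamma> \<le> t"
  shows "measure_pmf.prob (rig_pmf n M Q) {S. t \<le> omega' n M S}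
           \<le> C * n powr \<beta> * (exp 1 * B / sqrt C * n powr (1/2 - \<beta>/2 - \<gamma>)) ^ t"
proof -
  define \<mu> where "\<mu> = measure_pmf.expectation Q real"
  define M' where "M' = C * n powr \<beta>"
  define c where "c = exp 1 * B * sqrt n / t"
  have "0 \<le> \<mu>" unfolding \<mu>_def by (intro integral_nonneg_AE) auto
  have "0 \<le> Y_scale n M" by (simp add: Y_scale_def)
  have "0 \<le> B"
    using assms(5) \<open>0 \<le> \<mu>\<close> \<open>0 \<le> Y_scale n M\<close> unfolding \<mu>_def by (metis mult_nonneg_nonneg order_trans)
  have "0 < M'" using assms by (simp add: M'_def)
  have "measure_pmf.prob (rig_pmf n M Q) {S. t \<le> omega' n M S} \<le> M * (real (n choose t) * (\<mu> / M) ^ t)"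
    using prob_omega'_ge[OF assms(2,3)] by (simp add: \<mu>_def mult.assoc)
  also have "\<dots> \<le> M * (c / sqrt M) ^ t"
  proof -
    have "real (n choose t) * (\<mu> / M) ^ t \<le> (exp 1 * (Y_scale n M * \<mu>) * sqrt n / (t * sqrt M)) ^ t"
      using assms \<open>0 \<le> \<mu>\<close> by (intro binomial_mult_pow_le_Y_scale) auto
    also have "\<dots> \<le> (c / sqrt M) ^ t"
    proof (rule power_mono)
      have "exp 1 * (Y_scale n M * \<mu>) * sqrt n / (t * sqrt M) \<le> exp 1 * B * sqrt n / (t * sqrt M)"
      using assms(5) by (intro divide_right_mono mult_right_mono mult_left_mono) (auto simp: \<mu>_def)
      then show "exp 1 * (Y_scale n M * \<mu>) * sqrt n / (t * sqrt M) \<le> c / sqrt M"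
      by (simp add: c_def)
    qed (use \<open>0 \<le> \<mu>\<close> \<open>0 \<le> Y_scale n M\<close> in simp)
    finally show ?thesis by (simp add: mult_left_mono)
  qed
  also have "\<dots> \<le> M' * (c / sqrt M') ^ t"
    \<comment> \<open>for \<open>t \<ge> 2\<close> the bound decreases in \<open>M\<close>, so \<open>M\<close> may be replaced by its lower bound\<close>
    using \<open>0 < M'\<close> \<open>0 \<le> B\<close> assms by (intro mult_div_sqrt_pow_antimono) (auto simp: M'_def c_def)
  also have "\<dots> \<le> M' * (exp 1 * B / sqrt C * n powr (1/2 - \<beta>/2 - \<gamma>)) ^ t"
  proof (intro mult_left_mono power_mono)
    have "sqrt n / sqrt (n powr \<beta>) = n powr (1/2 - \<beta>/2)"
      by (simp add: powr_half_sqrt[symmetric] powr_powr powr_diff)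
    then have "c / sqrt M' = exp 1 * B / sqrt C * n powr (1/2 - \<beta>/2) / t"
      using assms by (simp add: c_def M'_def real_sqrt_mult field_simps)
    also have "\<dots> \<le> exp 1 * B / sqrt C * n powr (1/2 - \<beta>/2) / n powr \<gamma>"
      using assms \<open>0 \<le> B\<close> by (intro divide_left_mono) auto
    finally show "c / sqrt M' \<le> exp 1 * B / sqrt C * n powr (1/2 - \<beta>/2 - \<gamma>)"
      by (simp add: powr_diff)
  qed (use \<open>0 < M'\<close> \<open>0 \<le> B\<close> in \<open>auto simp: c_def\<close>)
  finally show ?thesis by (simp add: M'_def)
qed

lemma powr_mult_power_tendsto_zero:
  fixes K e \<beta> \<gamma> :: real and t :: "nat \<Rightarrow> nat"
  assumes "0 \<le> K" "e < 0" "0 < \<gamma>" "\<And>n. n powr \<gamma> \<le> t n"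
  shows "(\<lambda>n. n powr \<beta> * (K * n powr e) ^ t n) \<longlonglongrightarrow> 0"
proof -
  obtain N :: nat where "\<beta> / - e < N" using reals_Archimedean2 by blast
  then have "\<beta> + N * e < 0" using assms(2) by (simp add: field_simps)
  have "(\<lambda>n. K * real n powr e) \<longlonglongrightarrow> 0"
    using assms(2) by (intro tendsto_mult_right_zero tendsto_neg_powr filterlim_real_sequentially)
  then have small: "\<forall>\<^sub>F n in sequentially. K * n powr e < 1"
    by (rule order_tendstoD) simp
  have long: "\<forall>\<^sub>F n in sequentially. N \<le> t n"
  proof (rule eventually_sequentiallyI)
    fix n assume "nat \<lceil>N powr (1/\<gamma>)\<rceil> \<le> n"
    then have "(N powr (1/\<gamma>)) powr \<gamma> \<le> n powr \<gamma>"
      using assms(3) by (intro powr_mono2) auto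
    then show "N \<le> t n"
      using assms(3) assms(4)[of n] by (simp add: powr_powr)
  qed
  have "\<forall>\<^sub>F n in sequentially. 0 \<le> n powr \<beta> * (K * n powr e) ^ t n"
    using assms(1) by (intro always_eventually allI mult_nonneg_nonneg zero_le_power) auto
  moreover have "\<forall>\<^sub>F n in sequentially. n powr \<beta> * (K * n powr e) ^ t n \<le> K ^ N * n powr (\<beta> + N * e)"
    using small long eventually_gt_at_top[of 0]
  proof eventually_elim
    case (elim n)
    then have "(K * n powr e) ^ t n \<le> (K * n powr e) ^ N"
      using assms(1) by (intro power_decreasing) auto
    also have "\<dots> = K ^ N * n powr (N * e)"
      using elim(3) by (simp add: power_mult_distrib powr_power)
    finally have "n powr \<beta> * (K * n powr e) ^ t n \<le> n powr \<beta> * (K ^ N * n powr (N * e))"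
      by (intro mult_left_mono) auto
    then show ?case
      by (simp add: powr_add mult.left_commute)
  qed
  moreover have "(\<lambda>n. K ^ N * real n powr (\<beta> + N * e)) \<longlonglongrightarrow> 0"
    using \<open>\<beta> + N * e < 0\<close> by (intro tendsto_mult_right_zero tendsto_neg_powr filterlim_real_sequentially)
  ultimately show ?thesis
    by (rule tendsto_sandwich[OF _ _ tendsto_const])
qed

lemma condition_A_bounded_mean:
  assumes "condition_A m P"
  obtains B where "0 < B"
    "\<forall>\<^sub>F n in sequentially. Y_scale n (m n) * measure_pmf.expectation (P n) real \<le> B"
proof -
  obtain B where "0 < B" and B: "\<forall>\<^sub>F n in sequentially.
      norm (measure_pmf.expectation (P n) (\<lambda>k. Y_scale n (m n) * real k)) \<le> B * norm (1::real)"
    using assms unfolding condition_A_def by (rule landau_o.bigE)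
  from B have "\<forall>\<^sub>F n in sequentially. Y_scale n (m n) * measure_pmf.expectation (P n) real \<le> B"
    by eventually_elim simp
  with \<open>0 < B\<close> show ?thesis by (rule that)
qed

lemma measure_pmf_prob_le_compl:
  fixes f :: "'a \<Rightarrow> 'b::linorder"
  shows "measure_pmf.prob p {x. f x \<le> c} = 1 - measure_pmf.prob p {x. c < f x}"
  using measure_pmf.prob_neg[of p "\<lambda>x. c < f x"] by (simp add: not_less)

lemma prob_omega'_gt_powr_tendsto_zero:
  fixes m :: "nat \<Rightarrow> nat" and P :: "nat \<Rightarrow> nat pmf" and B C \<beta> \<gamma> :: real
  assumes "\<And>n. 0 < m n" "\<And>n. set_pmf (P n) \<subseteq> {0..m n}"
    and "0 < B" "\<forall>\<^sub>F n in sequentially. Y_scale n (m n) * measure_pmf.expectation (P n) real \<le> B"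
    and "0 < C" "\<forall>\<^sub>F n in sequentially. C * n powr \<beta> \<le> m n"
    and "0 < \<gamma>" "1/2 - \<beta>/2 < \<gamma>"
  shows "(\<lambda>n. measure_pmf.prob (rig_pmf n (m n) (P n)) {S. n powr \<gamma> < omega' n (m n) S}) \<longlonglongrightarrow> 0"
proof -
  define t where "t n = nat \<lfloor>n powr \<gamma>\<rfloor> + 1" for n :: nat
  define K where "K = exp 1 * B / sqrt C"
  have t_ge: "n powr \<gamma> \<le> t n" for n
    using powr_ge_zero[of n \<gamma>] unfolding t_def by linarith
  have event: "{S. n powr \<gamma> < omega' n (m n) S} = {S. t n \<le> omega' n (m n) S}" for n
  proof -
    have "n powr \<gamma> < k \<longleftrightarrow> t n \<le> k" for k :: nat
      using powr_ge_zero[of n \<gamma>] unfolding t_def by linarith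
    then show ?thesis by blast
  qed
  have "\<forall>\<^sub>F n in sequentially. 0 \<le> measure_pmf.prob (rig_pmf n (m n) (P n)) {S. t n \<le> omega' n (m n) S}"
    by simp
  moreover have "\<forall>\<^sub>F n in sequentially. measure_pmf.prob (rig_pmf n (m n) (P n)) {S. t n \<le> omega' n (m n) S}
          \<le> C * (n powr \<beta> * (K * n powr (1/2 - \<beta>/2 - \<gamma>)) ^ t n)"
    using assms(4,6) eventually_gt_at_top[of 0]
  proof eventually_elim
    case (elim n)
    have "2 \<le> t n"
    proof -
      have "1 \<le> n powr \<gamma>" using elim(3) assms(7) by (simp add: ge_one_powr_ge_zero)
      then show ?thesis unfolding t_def by linarith
    qed
    have "measure_pmf.prob (rig_pmf n (m n) (P n)) {S. t n \<le> omega' n (m n) S}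
          \<le> C * n powr \<beta> * (K * n powr (1/2 - \<beta>/2 - \<gamma>)) ^ t n"
      unfolding K_def using elim(3) \<open>2 \<le> t n\<close> t_ge
      by (intro prob_omega'_ge_le_powr assms(1,2,5) elim(1,2)) auto
    then show ?case
      by (simp only: mult.assoc)
  qed
  moreover have "(\<lambda>n. C * (n powr \<beta> * (K * n powr (1/2 - \<beta>/2 - \<gamma>)) ^ t n)) \<longlonglongrightarrow> 0"
    using assms(3,5,7,8) t_ge
    by (intro tendsto_mult_right_zero powr_mult_power_tendsto_zero[where \<gamma> = \<gamma>]) (auto simp: K_def)
  ultimately show ?thesis
    unfolding event by (rule tendsto_sandwich[OF _ _ tendsto_const])
qed

theorem mainTheorem9:
  fixes \<alpha> \<beta> :: real and m :: "nat \<Rightarrow> nat" and P :: "nat \<Rightarrow> nat pmf"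
  assumes "1 < \<alpha>" "\<alpha> < 2"
    and "\<And>n. 0 < m n"
    and "\<And>n. set_pmf (P n) \<subseteq> {0..m n}"
    and "filterlim m at_top sequentially"
    and "condition_A m P"
    and "condition_PL \<alpha> m P"
    and "\<beta> > \<alpha> - 1"
    and "(\<lambda>n. real (m n)) \<in> \<Omega>(\<lambda>n. real n powr \<beta>)"
  shows "\<exists>\<delta>>0. (\<lambda>n. measure_pmf.prob (rig_pmf n (m n) (P n))
            {S. real (omega' n (m n) S) \<le> real n powr (1 - \<alpha>/2 - \<delta>)}) \<longlonglongrightarrow> 1"
proof -
  define \<delta> where "\<delta> = min ((\<beta> - \<alpha> + 1) / 4) ((2 - \<alpha>) / 4)"
  have "0 < \<delta>"
    using assms(2,8) by (simp add: \<delta>_def)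
  obtain B where "0 < B"
    "\<forall>\<^sub>F n in sequentially. Y_scale n (m n) * measure_pmf.expectation (P n) real \<le> B"
    using assms(6) by (rule condition_A_bounded_mean)
  moreover obtain C where "0 < C" "\<forall>\<^sub>F n in sequentially. C * n powr \<beta> \<le> m n"
    using assms(9) by (elim landau_omega.bigE) auto
  moreover have "0 < 1 - \<alpha>/2 - \<delta>" "1/2 - \<beta>/2 < 1 - \<alpha>/2 - \<delta>"
    using assms(2,8) by (auto simp: \<delta>_def min_def field_simps)
  ultimately have "(\<lambda>n. measure_pmf.prob (rig_pmf n (m n) (P n))
      {S. n powr (1 - \<alpha>/2 - \<delta>) < omega' n (m n) S}) \<longlonglongrightarrow> 0"
    by (rule prob_omega'_gt_powr_tendsto_zero[OF assms(3,4)])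
  then have "(\<lambda>n. 1 - measure_pmf.prob (rig_pmf n (m n) (P n))
      {S. n powr (1 - \<alpha>/2 - \<delta>) < omega' n (m n) S}) \<longlonglongrightarrow> 1"
    using tendsto_diff[OF tendsto_const[of 1]] by fastforce
  then have "(\<lambda>n. measure_pmf.prob (rig_pmf n (m n) (P n))
      {S. real (omega' n (m n) S) \<le> real n powr (1 - \<alpha>/2 - \<delta>)}) \<longlonglongrightarrow> 1"
    by (simp add: measure_pmf_prob_le_compl)
  with \<open>0 < \<delta>\<close> show ?thesis by blast
qed

end
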